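(* Let $(Q',\mathbf z')$ and $(Q'',\mathbf z'')$ be labeled CAT(0) planar graphs with $\mathbf z'=(z'_1,\dots,z'_n)$, $\mathbf z''=(z''_1,\dots,z''_n)$. Suppose a vertex $v'\in V(Q')$ satisfies $z'_i=v'$ for all $i$ in the cyclic interval $[p,q]$, and a vertex $v''\in V(Q'')$ satisfies $z''_i=v''$ for all $i$ in the cyclic interval $[r,s]$, where $[p,q]$ and $[r,s]$ are proper cyclic intervals with $[p,q]\cup[r,s]=[n]$. Let $Q$ be obtained from $Q'$ and $Q''$ by identifying $v'$ with $v''$, with labels $z_i=z'_i$ for $i\in[r,s]$ and $z_i=z''_i$ for $i\in[p,q]$. Then $\pi_\bullet(Q)=\pi_\bullet(Q')+\pi_\bullet(Q'')$.
   Context: A CAT(0) planar graph is a nonempty connected finite directed plane graph whose interior faces are triangles with edges forming directed 3-cycles, whose interior vertices have degree at least 6, and in which every edge and vertex lies on the perimeter of some face; labeled means equipped with $\mathbf z\in V(Q)^n$ (not necessarily distinct). Directed distance $\delta$: minimal walk cost, 1 along and 2 against an edge orientation. The tropical Plücker vector of a labeled graph is $\pi_I=-\frac13\min_{x\in V(Q)}\sum_{i\in I}\delta(x,z_i)$ for $I\in\binom{[n]}3$. A cyclic interval is $\{a,a+1,\dots,b\}$ modulo $n$. *)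

theory Defs
  imports "HOL-Analysis.Analysis"
begin

text \<open>A directed graph is given by a vertex set V and a set of directed edges
E \<subseteq> V \<times> V (at most one edge per ordered pair).\<close>

definition plane_embedding ::
  "'v set \<Rightarrow> ('v \<times> 'v) set \<Rightarrow> ('v \<Rightarrow> complex) \<Rightarrow> ('v \<times> 'v \<Rightarrow> real \<Rightarrow> complex) \<Rightarrow> bool" where
  "plane_embedding V E pos gam \<longleftrightarrow>
     inj_on pos V \<and>
     (\<forall>e\<in>E. arc (gam e) \<and> pathstart (gam e) = pos (fst e) \<and> pathfinish (gam e) = pos (snd e)) \<and>
     (\<forall>e\<in>E. \<forall>v\<in>V. pos v \<in> path_image (gam e) \<longrightarrow> v = fst e \<or> v = snd e) \<and>
     (\<forall>e\<in>E. \<forall>e'\<in>E. e \<noteq> e' \<longrightarrow>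
        path_image (gam e) \<inter> path_image (gam e') \<subseteq> pos ` ({fst e, snd e} \<inter> {fst e', snd e'}))"

definition drawing ::
  "'v set \<Rightarrow> ('v \<times> 'v) set \<Rightarrow> ('v \<Rightarrow> complex) \<Rightarrow> ('v \<times> 'v \<Rightarrow> real \<Rightarrow> complex) \<Rightarrow> complex set" where
  "drawing V E pos gam = pos ` V \<union> (\<Union>e\<in>E. path_image (gam e))"

definition faces ::
  "'v set \<Rightarrow> ('v \<times> 'v) set \<Rightarrow> ('v \<Rightarrow> complex) \<Rightarrow> ('v \<times> 'v \<Rightarrow> real \<Rightarrow> complex) \<Rightarrow> complex set set" where
  "faces V E pos gam = components (- drawing V E pos gam)"

definition interior_vertex ::
  "'v set \<Rightarrow> ('v \<times> 'v) set \<Rightarrow> ('v \<Rightarrow> complex) \<Rightarrow> ('v \<times> 'v \<Rightarrow> real \<Rightarrow> complex) \<Rightarrow> 'v \<Rightarrow> bool" where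
  "interior_vertex V E pos gam v \<longleftrightarrow>
     v \<in> V \<and> (\<forall>F\<in>faces V E pos gam. \<not> bounded F \<longrightarrow> pos v \<notin> frontier F)"

definition degree :: "('v \<times> 'v) set \<Rightarrow> 'v \<Rightarrow> nat" where
  "degree E v = card {e\<in>E. fst e = v \<or> snd e = v}"

definition graph_connected :: "'v set \<Rightarrow> ('v \<times> 'v) set \<Rightarrow> bool" where
  "graph_connected V E \<longleftrightarrow> (\<forall>x\<in>V. \<forall>y\<in>V. (x, y) \<in> (E \<union> E\<inverse>)\<^sup>*)"

definition cat0_plane_graph ::
  "'v set \<Rightarrow> ('v \<times> 'v) set \<Rightarrow> ('v \<Rightarrow> complex) \<Rightarrow> ('v \<times> 'v \<Rightarrow> real \<Rightarrow> complex) \<Rightarrow> bool" where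
  "cat0_plane_graph V E pos gam \<longleftrightarrow>
     V \<noteq> {} \<and> finite V \<and> E \<subseteq> V \<times> V \<and> graph_connected V E \<and>
     plane_embedding V E pos gam \<and>
     \<comment> \<open>interior faces are triangles whose edges form a directed 3-cycle\<close>
     (\<forall>F\<in>faces V E pos gam. bounded F \<longrightarrow>
        (\<exists>a b c. distinct [a, b, c] \<and> (a, b) \<in> E \<and> (b, c) \<in> E \<and> (c, a) \<in> E \<and>
           frontier F = path_image (gam (a, b)) \<union> path_image (gam (b, c)) \<union> path_image (gam (c, a)))) \<and>
     \<comment> \<open>interior vertices have degree at least 6\<close>
     (\<forall>v\<in>V. interior_vertex V E pos gam v \<longrightarrow> degree E v \<ge> 6) \<and>
     \<comment> \<open>every vertex and every edge lies on the perimeter of some (interior) face\<close>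
     (\<forall>v\<in>V. \<exists>F\<in>faces V E pos gam. bounded F \<and> pos v \<in> frontier F) \<and>
     (\<forall>e\<in>E. \<exists>F\<in>faces V E pos gam. bounded F \<and> path_image (gam e) \<subseteq> frontier F)"

definition cat0_planar_graph :: "'v set \<Rightarrow> ('v \<times> 'v) set \<Rightarrow> bool" where
  "cat0_planar_graph V E \<longleftrightarrow> (\<exists>pos gam. cat0_plane_graph V E pos gam)"

inductive walk_cost :: "('v \<times> 'v) set \<Rightarrow> 'v \<Rightarrow> 'v \<Rightarrow> nat \<Rightarrow> bool" for E where
  nil: "walk_cost E x x 0"
| fwd: "(x, y) \<in> E \<Longrightarrow> walk_cost E y w c \<Longrightarrow> walk_cost E x w (c + 1)"
| bwd: "(y, x) \<in> E \<Longrightarrow> walk_cost E y w c \<Longrightarrow> walk_cost E x w (c + 2)"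

definition ddist :: "('v \<times> 'v) set \<Rightarrow> 'v \<Rightarrow> 'v \<Rightarrow> nat" where
  "ddist E x y = (LEAST c. walk_cost E x y c)"

definition trop_pluecker :: "'v set \<Rightarrow> ('v \<times> 'v) set \<Rightarrow> (nat \<Rightarrow> 'v) \<Rightarrow> nat set \<Rightarrow> real" where
  "trop_pluecker V E z I = - (1/3) * Min ((\<lambda>x. real (\<Sum>i\<in>I. ddist E x (z i))) ` V)"

definition cyc_interval :: "nat \<Rightarrow> nat \<Rightarrow> nat \<Rightarrow> nat set" where
  "cyc_interval n a b = (if a \<le> b then {a..b} else {a..n} \<union> {1..b})"

definition proper_cyc_interval :: "nat \<Rightarrow> nat \<Rightarrow> nat \<Rightarrow> bool" where
  "proper_cyc_interval n a b \<longleftrightarrow> a \<in> {1..n} \<and> b \<in> {1..n} \<and> cyc_interval n a b \<noteq> {1..n}"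

text \<open>Gluing two graphs by identifying v' (in the first) with v'' (in the second).
Vertices of the second graph other than v'' become Inr; v'' becomes Inl v'.\<close>

definition glue_map :: "'a \<Rightarrow> 'b \<Rightarrow> 'b \<Rightarrow> 'a + 'b" where
  "glue_map v' v'' y = (if y = v'' then Inl v' else Inr y)"

definition glue_V :: "'a set \<Rightarrow> 'b set \<Rightarrow> 'b \<Rightarrow> ('a + 'b) set" where
  "glue_V V' V'' v'' = Inl ` V' \<union> Inr ` (V'' - {v''})"

definition glue_E :: "('a \<times> 'a) set \<Rightarrow> ('b \<times> 'b) set \<Rightarrow> 'a \<Rightarrow> 'b \<Rightarrow> (('a + 'b) \<times> ('a + 'b)) set" where
  "glue_E E' E'' v' v'' =
     (\<lambda>(a, b). (Inl a, Inl b)) ` E' \<union> (\<lambda>(a, b). (glue_map v' v'' a, glue_map v' v'' b)) ` E''"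

end

theory Submission
  imports Defs
begin

text \<open>Let \<open>\<pi>'\<close> and \<open>\<pi>''\<close> be the retractions of the glued graph \<open>Q\<close> onto \<open>Q'\<close> and \<open>Q''\<close> that
collapse the other piece to the cut vertex. Directed distances in \<open>Q\<close> add up:
\<open>\<delta>(u, w) = \<delta>'(\<pi>' u, \<pi>' w) + \<delta>''(\<pi>'' u, \<pi>'' w)\<close>. Walks through the cut vertex give \<open>\<le>\<close>; for
\<open>\<ge>\<close>, the right-hand side, as a function of \<open>u\<close>, changes along every edge by at most the
cost of traversing it. Hence the objective defining \<open>\<pi>\<^sub>I(Q)\<close> at \<open>x\<close> is \<open>f'(\<pi>' x) + f''(\<pi>'' x)\<close>,
to be minimised over the wedge \<open>V' \<times> {v''} \<union> {v'} \<times> V''\<close>. Two of the three indices of \<open>I\<close>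
lie in one of the intervals, say \<open>[r, s]\<close>, so \<open>v''\<close> carries two of the three labels of \<open>Q''\<close>.
A vertex carrying two thirds of the labels minimises the objective, because
\<open>\<delta>(v, z) \<le> \<delta>(v, y) + \<delta>(y, z) \<le> 2 \<delta>(y, v) + \<delta>(y, z)\<close>. So the wedge contains a pair of
minimisers and the minimum is \<open>min f' + min f''\<close>.\<close>

lemma walk_cost_append:
  "walk_cost E x y c \<Longrightarrow> walk_cost E y z d \<Longrightarrow> walk_cost E x z (c + d)"
proof (induction rule: walk_cost.induct)
  case (nil x)
  then show ?case by simp
next
  case (fwd x y w c)
  then have "walk_cost E x z (c + d + 1)" by (intro walk_cost.fwd)
  then show ?case by (simp add: algebra_simps)
next
  case (bwd y x w c)
  then have "walk_cost E x z (c + d + 2)" by (intro walk_cost.bwd)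
  then show ?case by (simp add: algebra_simps)
qed

lemma walk_cost_edge_fwd: "(x, y) \<in> E \<Longrightarrow> walk_cost E x y 1"
  using walk_cost.fwd[OF _ walk_cost.nil, of x y E] by simp

lemma walk_cost_edge_bwd: "(y, x) \<in> E \<Longrightarrow> walk_cost E x y 2"
  using walk_cost.bwd[OF _ walk_cost.nil, of y x E] by (simp add: numeral_2_eq_2)

lemma walk_cost_reverse: "walk_cost E x y c \<Longrightarrow> \<exists>c' \<le> 2 * c. walk_cost E y x c'"
proof (induction rule: walk_cost.induct)
  case (nil x)
  have "walk_cost E x x 0" by (rule walk_cost.nil)
  then show ?case by (intro exI[of _ 0]) simp
next
  case (fwd x y w c)
  then obtain c' where "c' \<le> 2 * c" and "walk_cost E w y c'" by blast
  from this(2) walk_cost_edge_bwd[OF fwd.hyps(1)] have "walk_cost E w x (c' + 2)"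
    by (rule walk_cost_append)
  with \<open>c' \<le> 2 * c\<close> show ?case by (intro exI[of _ "c' + 2"]) simp
next
  case (bwd y x w c)
  then obtain c' where "c' \<le> 2 * c" and "walk_cost E w y c'" by blast
  from this(2) walk_cost_edge_fwd[OF bwd.hyps(1)] have "walk_cost E w x (c' + 1)"
    by (rule walk_cost_append)
  with \<open>c' \<le> 2 * c\<close> show ?case by (intro exI[of _ "c' + 1"]) simp
qed

lemma walk_cost_if_rtrancl: "(x, y) \<in> (E \<union> E\<inverse>)\<^sup>* \<Longrightarrow> \<exists>c. walk_cost E x y c"
proof (induction rule: rtrancl_induct)
  case base
  show ?case using walk_cost.nil by metis
next
  case (step y z)
  then obtain c where c: "walk_cost E x y c" by blast
  from step.hyps(2) show ?case
  proof
    assume "(y, z) \<in> E"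
    from c walk_cost_edge_fwd[OF this] show ?case by (blast intro: walk_cost_append)
  next
    assume "(y, z) \<in> E\<inverse>"
    then have "(z, y) \<in> E" by simp
    from c walk_cost_edge_bwd[OF this] show ?case by (blast intro: walk_cost_append)
  qed
qed

lemma walk_cost_map:
  assumes "\<And>a b. (a, b) \<in> E \<Longrightarrow> (h a, h b) \<in> F" and "walk_cost E x y c"
  shows "walk_cost F (h x) (h y) c"
  using assms(2)
proof induction
  case (nil x)
  then show ?case by (rule walk_cost.nil)
next
  case (fwd x y w c)
  then show ?case using walk_cost.fwd[OF assms(1)] by blast
next
  case (bwd y x w c)
  then show ?case using walk_cost.bwd[OF assms(1)] by blast
qed

lemma walk_cost_ge_potential:
  fixes D :: "'v \<Rightarrow> nat"
  assumes "walk_cost E u w c"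
    and "\<And>a b. (a, b) \<in> E \<Longrightarrow> D a \<le> D b + 1 \<and> D b \<le> D a + 2" and "D w = 0"
  shows "D u \<le> c"
  using assms by induction fastforce+

lemma ddist_le: "walk_cost E x y c \<Longrightarrow> ddist E x y \<le> c"
  unfolding ddist_def by (rule Least_le)

lemma walk_cost_ddist: "walk_cost E x y c \<Longrightarrow> walk_cost E x y (ddist E x y)"
  unfolding ddist_def by (rule LeastI)

lemma ddist_self [simp]: "ddist E x x = 0"
  using ddist_le[OF walk_cost.nil, of E x] by simp

lemma walk_cost_ddist_connected:
  assumes "graph_connected V E" "x \<in> V" "y \<in> V"
  shows "walk_cost E x y (ddist E x y)"
proof -
  have "(x, y) \<in> (E \<union> E\<inverse>)\<^sup>*"
    using assms(1)[unfolded graph_connected_def, rule_format, OF assms(2,3)] .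
  then obtain c where "walk_cost E x y c"
    by (blast dest: walk_cost_if_rtrancl)
  then show ?thesis by (rule walk_cost_ddist)
qed

lemma ddist_triangle:
  assumes "graph_connected V E" "x \<in> V" "y \<in> V" "z \<in> V"
  shows "ddist E x z \<le> ddist E x y + ddist E y z"
  using assms by (meson ddist_le walk_cost_append walk_cost_ddist_connected)

lemma ddist_reverse_le:
  assumes "graph_connected V E" "x \<in> V" "y \<in> V"
  shows "ddist E x y \<le> 2 * ddist E y x"
  using walk_cost_reverse[OF walk_cost_ddist_connected[OF assms(1,3,2)]]
  by (auto dest: ddist_le)

lemma ddist_edge_step:
  assumes conn: "graph_connected V E" and ab: "(a, b) \<in> E" and "a \<in> V" "b \<in> V" "w \<in> V"
  shows "ddist E a w \<le> ddist E b w + 1" and "ddist E b w \<le> ddist E a w + 2"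
proof -
  have "walk_cost E a w (1 + ddist E b w)"
    using walk_cost_edge_fwd[OF ab] walk_cost_ddist_connected[OF conn \<open>b \<in> V\<close> \<open>w \<in> V\<close>]
    by (rule walk_cost_append)
  then show "ddist E a w \<le> ddist E b w + 1" by (simp add: ddist_le)
  have "walk_cost E b w (2 + ddist E a w)"
    using walk_cost_edge_bwd[OF ab] walk_cost_ddist_connected[OF conn \<open>a \<in> V\<close> \<open>w \<in> V\<close>]
    by (rule walk_cost_append)
  then show "ddist E b w \<le> ddist E a w + 2" by (simp add: ddist_le)
qed

lemma ddist_sum_le_at_majority_label:
  assumes conn: "graph_connected V E" and "finite I" and v: "v \<in> V" and y: "y \<in> V"
    and z: "\<forall>i\<in>I. z i \<in> V"
    and maj: "2 * card {i\<in>I. z i \<noteq> v} \<le> card {i\<in>I. z i = v}"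
  shows "(\<Sum>i\<in>I. ddist E v (z i)) \<le> (\<Sum>i\<in>I. ddist E y (z i))"
proof -
  let ?J = "{i\<in>I. z i = v}" and ?K = "{i\<in>I. z i \<noteq> v}"
  have fin: "finite ?J" "finite ?K" using \<open>finite I\<close> by simp_all
  have "(\<Sum>i\<in>I. ddist E v (z i)) = (\<Sum>i\<in>?K. ddist E v (z i))"
    using \<open>finite I\<close> by (intro sum.mono_neutral_right) auto
  also have "\<dots> \<le> (\<Sum>i\<in>?K. 2 * ddist E y v + ddist E y (z i))"
  proof (rule sum_mono)
    fix i assume "i \<in> ?K"
    then have "z i \<in> V" using z by blast
    then show "ddist E v (z i) \<le> 2 * ddist E y v + ddist E y (z i)"
      using ddist_triangle[OF conn v y] ddist_reverse_le[OF conn v y] by fastforce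
  qed
  also have "\<dots> = 2 * card ?K * ddist E y v + (\<Sum>i\<in>?K. ddist E y (z i))"
    by (simp add: sum.distrib)
  also have "\<dots> \<le> card ?J * ddist E y v + (\<Sum>i\<in>?K. ddist E y (z i))"
    using maj by simp
  also have "\<dots> = (\<Sum>i\<in>?J. ddist E y (z i)) + (\<Sum>i\<in>?K. ddist E y (z i))"
    by simp
  also have "\<dots> = (\<Sum>i\<in>I. ddist E y (z i))"
    using fin by (subst sum.union_disjoint[symmetric]) (auto intro: sum.cong)
  finally show ?thesis .
qed

lemma Min_label_sum_at_majority_label:
  assumes conn: "graph_connected V E" and "finite V" "finite I" "v \<in> V" "\<forall>i\<in>I. z i \<in> V"
    and maj: "2 * card {i\<in>I. z i \<noteq> v} \<le> card {i\<in>I. z i = v}"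
  shows "Min ((\<lambda>x. real (\<Sum>i\<in>I. ddist E x (z i))) ` V) = real (\<Sum>i\<in>I. ddist E v (z i))"
proof (rule Min_eqI)
  show "finite ((\<lambda>x. real (\<Sum>i\<in>I. ddist E x (z i))) ` V)"
    using \<open>finite V\<close> by simp
  show "real (\<Sum>i\<in>I. ddist E v (z i)) \<le> t" if "t \<in> (\<lambda>x. real (\<Sum>i\<in>I. ddist E x (z i))) ` V" for t
  proof -
    from that obtain y where "y \<in> V" and "t = real (\<Sum>i\<in>I. ddist E y (z i))"
      by blast
    with ddist_sum_le_at_majority_label[OF conn \<open>finite I\<close> \<open>v \<in> V\<close> _ assms(5) maj] show ?thesis
      by (simp only: of_nat_le_iff)
  qed
  show "real (\<Sum>i\<in>I. ddist E v (z i)) \<in> (\<lambda>x. real (\<Sum>i\<in>I. ddist E x (z i))) ` V"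
    using \<open>v \<in> V\<close> by (rule imageI)
qed

lemma Min_add_on_wedge:
  fixes f :: "'a \<Rightarrow> 'c::linordered_ab_semigroup_add" and g :: "'b \<Rightarrow> 'c"
  assumes A: "finite A" "a \<in> A" and B: "finite B" "b \<in> B"
    and min: "f a = Min (f ` A) \<or> g b = Min (g ` B)"
  shows "Min ((\<lambda>(x, y). f x + g y) ` (A \<times> {b} \<union> {a} \<times> B)) = Min (f ` A) + Min (g ` B)"
proof (rule Min_eqI)
  show "finite ((\<lambda>(x, y). f x + g y) ` (A \<times> {b} \<union> {a} \<times> B))"
    using A B by simp
  show "Min (f ` A) + Min (g ` B) \<le> t" if "t \<in> (\<lambda>(x, y). f x + g y) ` (A \<times> {b} \<union> {a} \<times> B)" for t
    using that A B by (auto intro!: add_mono Min_le)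
  have "Min (f ` A) \<in> f ` A" "Min (g ` B) \<in> g ` B"
    using A B by (auto intro!: Min_in)
  then obtain a0 b0 where a0: "a0 \<in> A" "f a0 = Min (f ` A)" and b0: "b0 \<in> B" "g b0 = Min (g ` B)"
    by (metis imageE)
  from min show "Min (f ` A) + Min (g ` B) \<in> (\<lambda>(x, y). f x + g y) ` (A \<times> {b} \<union> {a} \<times> B)"
  proof
    assume "f a = Min (f ` A)"
    then show ?thesis using b0 by (intro image_eqI[of _ _ "(a, b0)"]) auto
  next
    assume "g b = Min (g ` B)"
    then show ?thesis using a0 by (intro image_eqI[of _ _ "(a0, b)"]) auto
  qed
qed

lemma card3_majority_of_cover:
  assumes "finite I" "card I = 3" "I \<subseteq> S \<union> T" "\<forall>i\<in>S. P i" "\<forall>i\<in>T. Q i"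
  shows "2 * card {i\<in>I. \<not> P i} \<le> card {i\<in>I. P i} \<or> 2 * card {i\<in>I. \<not> Q i} \<le> card {i\<in>I. Q i}"
proof -
  have split: "card {i\<in>I. \<not> R i} = card I - card {i\<in>I. R i}" for R
    using assms(1) by (subst card_Diff_subset[symmetric]) (auto intro: arg_cong[where f = card])
  have "I = (I \<inter> S) \<union> (I \<inter> T)"
    using assms(3) by blast
  then have "card I \<le> card (I \<inter> S) + card (I \<inter> T)"
    by (metis card_Un_le)
  moreover have "card (I \<inter> S) \<le> card {i\<in>I. P i}" "card (I \<inter> T) \<le> card {i\<in>I. Q i}"
    using assms(1,4,5) by (auto intro!: card_mono)
  ultimately have "2 \<le> card {i\<in>I. P i} \<or> 2 \<le> card {i\<in>I. Q i}"
    using assms(2) by linarith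
  then show ?thesis
    unfolding split assms(2) by auto
qed

lemma cat0_planar_graph_imp:
  "cat0_planar_graph V E \<Longrightarrow> finite V \<and> E \<subseteq> V \<times> V \<and> graph_connected V E"
  unfolding cat0_planar_graph_def cat0_plane_graph_def by blast

definition glue_proj1 :: "'a \<Rightarrow> 'a + 'b \<Rightarrow> 'a" where
  "glue_proj1 v' = case_sum id (\<lambda>_. v')"

definition glue_proj2 :: "'b \<Rightarrow> 'a + 'b \<Rightarrow> 'b" where
  "glue_proj2 v'' = case_sum (\<lambda>_. v'') id"

lemma glue_proj_simps [simp]:
  "glue_proj1 v' (Inl a) = a" "glue_proj1 v' (glue_map v' v'' y) = v'"
  "glue_proj2 v'' (Inl a) = v''" "glue_proj2 v'' (glue_map v' v'' y) = y"
  by (simp_all add: glue_proj1_def glue_proj2_def glue_map_def)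

lemma glue_V_cases:
  assumes "x \<in> glue_V V' V'' v''"
  obtains a where "a \<in> V'" "x = Inl a" | y where "y \<in> V''" "x = glue_map v' v'' y"
proof -
  from assms consider a where "a \<in> V'" "x = Inl a" | y where "y \<in> V''" "y \<noteq> v''" "x = Inr y"
    unfolding glue_V_def by blast
  then show thesis
  proof cases
    case 1
    then show ?thesis by (rule that(1))
  next
    case 2
    then have "x = glue_map v' v'' y" by (simp add: glue_map_def)
    with 2(1) show ?thesis by (rule that(2))
  qed
qed

lemma glue_map_in_glue_V: "y \<in> V'' \<Longrightarrow> v' \<in> V' \<Longrightarrow> glue_map v' v'' y \<in> glue_V V' V'' v''"
  by (auto simp: glue_map_def glue_V_def)

lemma glue_proj_mem:
  assumes "x \<in> glue_V V' V'' v''" "v' \<in> V'" "v'' \<in> V''"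
  shows "glue_proj1 v' x \<in> V' \<and> glue_proj2 v'' x \<in> V''"
  using assms(1) by (cases rule: glue_V_cases[where v' = v']) (simp_all add: assms(2,3))

lemma glue_label:
  assumes "v' \<in> V'" "z' \<in> V'" "z'' \<in> V''" "b \<Longrightarrow> z'' = v''" "\<not> b \<Longrightarrow> z' = v'"
  defines "z \<equiv> if b then Inl z' else glue_map v' v'' z''"
  shows "z \<in> glue_V V' V'' v'' \<and> glue_proj1 v' z = z' \<and> glue_proj2 v'' z = z''"
  using assms glue_map_in_glue_V[OF assms(3,1)] by (cases b) (simp_all add: glue_V_def)

lemma glue_V_proj_image:
  assumes v': "v' \<in> V'" and v'': "v'' \<in> V''"
  shows "(\<lambda>x. (glue_proj1 v' x, glue_proj2 v'' x)) ` glue_V V' V'' v'' = V' \<times> {v''} \<union> {v'} \<times> V''"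
proof (intro equalityI subsetI)
  fix p assume "p \<in> (\<lambda>x. (glue_proj1 v' x, glue_proj2 v'' x)) ` glue_V V' V'' v''"
  then obtain x where "x \<in> glue_V V' V'' v''" "p = (glue_proj1 v' x, glue_proj2 v'' x)"
    by blast
  then show "p \<in> V' \<times> {v''} \<union> {v'} \<times> V''"
    using v' by (cases rule: glue_V_cases[where v' = v']) auto
next
  fix p assume "p \<in> V' \<times> {v''} \<union> {v'} \<times> V''"
  then consider a where "a \<in> V'" "p = (a, v'')" | y where "y \<in> V''" "p = (v', y)"
    by blast
  then show "p \<in> (\<lambda>x. (glue_proj1 v' x, glue_proj2 v'' x)) ` glue_V V' V'' v''"
  proof cases
    case 1
    then have "Inl a \<in> glue_V V' V'' v''" by (simp add: glue_V_def)
    then show ?thesis by (rule rev_image_eqI) (simp add: 1)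
  next
    case 2
    have "glue_map v' v'' y \<in> glue_V V' V'' v''" using 2(1) v' by (rule glue_map_in_glue_V)
    then show ?thesis by (rule rev_image_eqI) (simp add: 2)
  qed
qed

lemma glue_E_cases:
  assumes "(u, w) \<in> glue_E E' E'' v' v''"
  shows "(glue_proj1 v' u, glue_proj1 v' w) \<in> E' \<and> glue_proj2 v'' u = v'' \<and> glue_proj2 v'' w = v''
    \<or> glue_proj1 v' u = v' \<and> glue_proj1 v' w = v' \<and> (glue_proj2 v'' u, glue_proj2 v'' w) \<in> E''"
  using assms unfolding glue_E_def by auto

lemma walk_cost_glue:
  assumes c': "graph_connected V' E'" and c'': "graph_connected V'' E''"
    and v': "v' \<in> V'" and v'': "v'' \<in> V''"
    and u: "u \<in> glue_V V' V'' v''" and w: "w \<in> glue_V V' V'' v''"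
  shows "walk_cost (glue_E E' E'' v' v'') u w
           (ddist E' (glue_proj1 v' u) (glue_proj1 v' w) + ddist E'' (glue_proj2 v'' u) (glue_proj2 v'' w))"
proof -
  let ?G = "glue_E E' E'' v' v''"
  have left: "walk_cost ?G (Inl a) (Inl b) (ddist E' a b)" if "a \<in> V'" "b \<in> V'" for a b
    by (rule walk_cost_map[OF _ walk_cost_ddist_connected[OF c' that]]) (auto simp: glue_E_def)
  have right: "walk_cost ?G (glue_map v' v'' x) (glue_map v' v'' y) (ddist E'' x y)"
    if "x \<in> V''" "y \<in> V''" for x y
    by (rule walk_cost_map[OF _ walk_cost_ddist_connected[OF c'' that]]) (auto simp: glue_E_def)
  have cut: "glue_map v' v'' v'' = Inl v'"
    by (simp add: glue_map_def)
  from u show ?thesis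
  proof (cases rule: glue_V_cases[where v' = v'])
    case u_left: (1 a)
    from w show ?thesis
    proof (cases rule: glue_V_cases[where v' = v'])
      case (1 b)
      then show ?thesis using left u_left by simp
    next
      case (2 y)
      then show ?thesis
        using walk_cost_append[OF left[OF u_left(1) v'] right[OF v'' 2(1), unfolded cut]] u_left cut by simp
    qed
  next
    case u_right: (2 x)
    from w show ?thesis
    proof (cases rule: glue_V_cases[where v' = v'])
      case (1 b)
      then show ?thesis
        using walk_cost_append[OF right[OF u_right(1) v'', unfolded cut] left[OF v' 1(1)]] u_right cut
        by (simp add: add.commute)
    next
      case (2 y)
      then show ?thesis using right u_right by simp
    qed
  qed
qed

lemma ddist_glue:
  assumes E': "E' \<subseteq> V' \<times> V'" and E'': "E'' \<subseteq> V'' \<times> V''"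
    and c': "graph_connected V' E'" and c'': "graph_connected V'' E''"
    and v': "v' \<in> V'" and v'': "v'' \<in> V''"
    and u: "u \<in> glue_V V' V'' v''" and w: "w \<in> glue_V V' V'' v''"
  shows "ddist (glue_E E' E'' v' v'') u w =
           ddist E' (glue_proj1 v' u) (glue_proj1 v' w) + ddist E'' (glue_proj2 v'' u) (glue_proj2 v'' w)"
proof -
  let ?G = "glue_E E' E'' v' v''"
  define D where
    "D x = ddist E' (glue_proj1 v' x) (glue_proj1 v' w) + ddist E'' (glue_proj2 v'' x) (glue_proj2 v'' w)"
    for x
  have walk: "walk_cost ?G u w (D u)"
    unfolding D_def by (rule walk_cost_glue[OF c' c'' v' v'' u w])
  have w': "glue_proj1 v' w \<in> V'" and w'': "glue_proj2 v'' w \<in> V''"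
    using glue_proj_mem[OF w v' v''] by blast+
  have "D a \<le> D b + 1 \<and> D b \<le> D a + 2" if "(a, b) \<in> ?G" for a b
    using glue_E_cases[OF that]
  proof
    assume h: "(glue_proj1 v' a, glue_proj1 v' b) \<in> E' \<and> glue_proj2 v'' a = v'' \<and> glue_proj2 v'' b = v''"
    then have "glue_proj1 v' a \<in> V'" "glue_proj1 v' b \<in> V'" using E' by blast+
    with h ddist_edge_step[OF c' _ _ _ w'] show ?thesis unfolding D_def by fastforce
  next
    assume h: "glue_proj1 v' a = v' \<and> glue_proj1 v' b = v' \<and> (glue_proj2 v'' a, glue_proj2 v'' b) \<in> E''"
    then have "glue_proj2 v'' a \<in> V''" "glue_proj2 v'' b \<in> V''" using E'' by blast+
    with h ddist_edge_step[OF c'' _ _ _ w''] show ?thesis unfolding D_def by fastforce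
  qed
  moreover have "D w = 0"
    by (simp add: D_def)
  ultimately have "D u \<le> ddist ?G u w"
    by (intro walk_cost_ge_potential[OF walk_cost_ddist[OF walk]])
  with ddist_le[OF walk] show ?thesis
    unfolding D_def by simp
qed

lemma trop_pluecker_glue:
  assumes Q': "finite V'" "E' \<subseteq> V' \<times> V'" "graph_connected V' E'"
    and Q'': "finite V''" "E'' \<subseteq> V'' \<times> V''" "graph_connected V'' E''"
    and v': "v' \<in> V'" and v'': "v'' \<in> V''" and "finite I"
    and z: "\<forall>i\<in>I. z i \<in> glue_V V' V'' v'' \<and> glue_proj1 v' (z i) = z' i \<and> glue_proj2 v'' (z i) = z'' i"
    and maj: "2 * card {i\<in>I. z' i \<noteq> v'} \<le> card {i\<in>I. z' i = v'}
              \<or> 2 * card {i\<in>I. z'' i \<noteq> v''} \<le> card {i\<in>I. z'' i = v''}"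
  shows "trop_pluecker (glue_V V' V'' v'') (glue_E E' E'' v' v'') z I
           = trop_pluecker V' E' z' I + trop_pluecker V'' E'' z'' I"
proof -
  let ?G = "glue_E E' E'' v' v''" and ?GV = "glue_V V' V'' v''"
  define f' where "f' = (\<lambda>x. real (\<Sum>i\<in>I. ddist E' x (z' i)))"
  define f'' where "f'' = (\<lambda>y. real (\<Sum>i\<in>I. ddist E'' y (z'' i)))"
  have objective: "real (\<Sum>i\<in>I. ddist ?G x (z i))
                     = (\<lambda>(a, b). f' a + f'' b) (glue_proj1 v' x, glue_proj2 v'' x)"
    if x: "x \<in> ?GV" for x
  proof -
    have "ddist ?G x (z i) = ddist E' (glue_proj1 v' x) (z' i) + ddist E'' (glue_proj2 v'' x) (z'' i)"
      if "i \<in> I" for i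
      using ddist_glue[OF Q'(2) Q''(2) Q'(3) Q''(3) v' v'' x] z that by simp
    then show ?thesis
      by (simp add: f'_def f''_def sum.distrib)
  qed
  have z': "\<forall>i\<in>I. z' i \<in> V'" and z'': "\<forall>i\<in>I. z'' i \<in> V''"
    using z glue_proj_mem[OF _ v' v''] by metis+
  have "f' v' = Min (f' ` V') \<or> f'' v'' = Min (f'' ` V'')"
    using maj Min_label_sum_at_majority_label[OF Q'(3,1) \<open>finite I\<close> v' z']
      Min_label_sum_at_majority_label[OF Q''(3,1) \<open>finite I\<close> v'' z'']
    unfolding f'_def f''_def by presburger
  then have wedge: "Min ((\<lambda>(a, b). f' a + f'' b) ` (V' \<times> {v''} \<union> {v'} \<times> V''))
                    = Min (f' ` V') + Min (f'' ` V'')"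
    by (rule Min_add_on_wedge[OF Q'(1) v' Q''(1) v''])
  have "(\<lambda>x. real (\<Sum>i\<in>I. ddist ?G x (z i))) ` ?GV
        = (\<lambda>(a, b). f' a + f'' b) ` (\<lambda>x. (glue_proj1 v' x, glue_proj2 v'' x)) ` ?GV"
    unfolding image_image by (rule image_cong[OF refl objective])
  also have "\<dots> = (\<lambda>(a, b). f' a + f'' b) ` (V' \<times> {v''} \<union> {v'} \<times> V'')"
    by (simp only: glue_V_proj_image[OF v' v''])
  finally have objective_image:
    "(\<lambda>x. real (\<Sum>i\<in>I. ddist ?G x (z i))) ` ?GV = (\<lambda>(a, b). f' a + f'' b) ` (V' \<times> {v''} \<union> {v'} \<times> V'')" .
  show ?thesis
    unfolding trop_pluecker_def f'_def[symmetric] f''_def[symmetric] objective_image wedge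
    by (rule distrib_left)
qed

theorem proposition12p1:
  fixes V' :: "'a set" and E' :: "('a \<times> 'a) set" and z' :: "nat \<Rightarrow> 'a" and v' :: 'a
    and V'' :: "'b set" and E'' :: "('b \<times> 'b) set" and z'' :: "nat \<Rightarrow> 'b" and v'' :: 'b
    and n p q r s :: nat
  assumes Q': "cat0_planar_graph V' E'" and lab': "\<forall>i\<in>{1..n}. z' i \<in> V'"
    and Q'': "cat0_planar_graph V'' E''" and lab'': "\<forall>i\<in>{1..n}. z'' i \<in> V''"
    and v': "v' \<in> V'" and v'': "v'' \<in> V''"
    and pq: "proper_cyc_interval n p q" and rs: "proper_cyc_interval n r s"
    and cover: "cyc_interval n p q \<union> cyc_interval n r s = {1..n}"
    and at_v': "\<forall>i\<in>cyc_interval n p q. z' i = v'"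
    and at_v'': "\<forall>i\<in>cyc_interval n r s. z'' i = v''"
  shows "\<forall>I. I \<subseteq> {1..n} \<and> card I = 3 \<longrightarrow>
           trop_pluecker (glue_V V' V'' v'') (glue_E E' E'' v' v'')
             (\<lambda>i. if i \<in> cyc_interval n r s then Inl (z' i) else glue_map v' v'' (z'' i)) I
           = trop_pluecker V' E' z' I + trop_pluecker V'' E'' z'' I"
proof (intro allI impI)
  fix I :: "nat set"
  assume I: "I \<subseteq> {1..n} \<and> card I = 3"
  let ?z = "\<lambda>i. if i \<in> cyc_interval n r s then Inl (z' i) else glue_map v' v'' (z'' i)"
  have "finite I" using I card.infinite by fastforce
  have G': "finite V'" "E' \<subseteq> V' \<times> V'" "graph_connected V' E'"
    and G'': "finite V''" "E'' \<subseteq> V'' \<times> V''" "graph_connected V'' E''"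
    using cat0_planar_graph_imp[OF Q'] cat0_planar_graph_imp[OF Q''] by blast+
  have "\<forall>i\<in>I. ?z i \<in> glue_V V' V'' v'' \<and> glue_proj1 v' (?z i) = z' i \<and> glue_proj2 v'' (?z i) = z'' i"
    using I lab' lab'' at_v' at_v'' cover by (intro ballI glue_label[OF v']) auto
  moreover have "2 * card {i\<in>I. z' i \<noteq> v'} \<le> card {i\<in>I. z' i = v'}
             \<or> 2 * card {i\<in>I. z'' i \<noteq> v''} \<le> card {i\<in>I. z'' i = v''}"
    using card3_majority_of_cover[OF \<open>finite I\<close> _ _ at_v' at_v''] I cover by simp
  ultimately show "trop_pluecker (glue_V V' V'' v'') (glue_E E' E'' v' v'') ?z I
                   = trop_pluecker V' E' z' I + trop_pluecker V'' E'' z'' I"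
    by (rule trop_pluecker_glue[OF G' G'' v' v'' \<open>finite I\<close>])
qed

end
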